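(* There is no countable totally ordered group $U$ such that every countable totally ordered group admits an order-embedding into $U$.
   Context: A totally ordered group is a group with a total order $\le$ such that $x\le y$ implies $zx\le zy$ and $xz\le yz$ for all $x,y,z$. An order-embedding is an injective group homomorphism preserving the order. *)

theory Defs
  imports "HOL-Algebra.Group" "HOL-Library.Countable_Set"
begin

definition totally_ordered_group :: "('a, 'b) monoid_scheme \<Rightarrow> ('a \<Rightarrow> 'a \<Rightarrow> bool) \<Rightarrow> bool" where
  "totally_ordered_group G r \<longleftrightarrow> group G
     \<and> (\<forall>x\<in>carrier G. r x x)
     \<and> (\<forall>x\<in>carrier G. \<forall>y\<in>carrier G. r x y \<and> r y x \<longrightarrow> x = y)
     \<and> (\<forall>x\<in>carrier G. \<forall>y\<in>carrier G. \<forall>z\<in>carrier G. r x y \<and> r y z \<longrightarrow> r x z)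
     \<and> (\<forall>x\<in>carrier G. \<forall>y\<in>carrier G. r x y \<or> r y x)
     \<and> (\<forall>x\<in>carrier G. \<forall>y\<in>carrier G. \<forall>z\<in>carrier G. r x y \<longrightarrow>
           r (z \<otimes>\<^bsub>G\<^esub> x) (z \<otimes>\<^bsub>G\<^esub> y) \<and> r (x \<otimes>\<^bsub>G\<^esub> z) (y \<otimes>\<^bsub>G\<^esub> z))"

definition order_embedding ::
  "('a, 'c) monoid_scheme \<Rightarrow> ('a \<Rightarrow> 'a \<Rightarrow> bool) \<Rightarrow> ('b, 'd) monoid_scheme \<Rightarrow> ('b \<Rightarrow> 'b \<Rightarrow> bool) \<Rightarrow> ('a \<Rightarrow> 'b) \<Rightarrow> bool" where
  "order_embedding G leG H leH f \<longleftrightarrow> f \<in> hom G H \<and> inj_on f (carrier G)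
     \<and> (\<forall>x\<in>carrier G. \<forall>y\<in>carrier G. leG x y \<longrightarrow> leH (f x) (f y))"

end

theory Submission
  imports Defs "HOL-Library.Product_Plus" "HOL-Analysis.Continuum_Not_Denumerable"
begin

text \<open>For a real slope \<open>a\<close>, order \<open>\<int>\<^sup>2\<close> by \<open>(p, q) \<mapsto> p + q a\<close>. An order-embedding \<open>f\<close>
  of this group into \<open>U\<close> is determined on the generators \<open>u = f (1,0)\<close>, \<open>v = f (0,1)\<close>, and
  for natural \<open>p, q\<close> we get \<open>u\<^sup>p \<le> v\<^sup>q \<longleftrightarrow> p \<le> q a\<close>. So the Dedekind cut of \<open>a\<close> is recorded by
  the pair \<open>(u, v)\<close> of elements of \<open>U\<close>. Distinct slopes have distinct cuts, and a countable
  \<open>U\<close> has only countably many pairs, so some slope gives a group that does not embed.\<close>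

lemma order_embedding_reflects_le:
  assumes G: "totally_ordered_group G leG" and H: "totally_ordered_group H leH"
    and f: "order_embedding G leG H leH f"
    and x: "x \<in> carrier G" and y: "y \<in> carrier G"
  shows "leH (f x) (f y) \<longleftrightarrow> leG x y"
proof
  assume fle: "leH (f x) (f y)"
  show "leG x y"
  proof (rule ccontr)
    assume "\<not> leG x y"
    with G x y have "leG y x" unfolding totally_ordered_group_def by blast
    with f x y have "leH (f y) (f x)" unfolding order_embedding_def by blast
    moreover have "f x \<in> carrier H" "f y \<in> carrier H"
      using f x y hom_carrier unfolding order_embedding_def by blast+
    ultimately have "f x = f y" using H fle unfolding totally_ordered_group_def by blast
    with f x y have "x = y" unfolding order_embedding_def by (auto dest: inj_onD)
    with G x \<open>\<not> leG x y\<close> show False unfolding totally_ordered_group_def by blast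
  qed
next
  show "leG x y \<Longrightarrow> leH (f x) (f y)"
    using f x y unfolding order_embedding_def by blast
qed

definition power_cut :: "('a, 'b) monoid_scheme \<Rightarrow> ('a \<Rightarrow> 'a \<Rightarrow> bool) \<Rightarrow> 'a \<Rightarrow> 'a \<Rightarrow> (nat \<times> nat) set"
  where "power_cut H leH u v = {(p, q). leH (u [^]\<^bsub>H\<^esub> p) (v [^]\<^bsub>H\<^esub> q)}"

definition ratio_cut :: "real \<Rightarrow> (nat \<times> nat) set"
  where "ratio_cut a = {(p, q). real p \<le> real q * a}"

lemma strict_mono_on_ratio_cut: "strict_mono_on {0..} ratio_cut"
proof (rule strict_mono_onI)
  fix a b :: real assume "a \<in> {0..}" "a < b"
  then have ab: "0 \<le> a" "a < b" by simp_all
  have "real q * a \<le> real q * b" for q :: nat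
    using ab by (simp add: mult_left_mono)
  then have "ratio_cut a \<subseteq> ratio_cut b"
    by (auto simp: ratio_cut_def intro: order_trans)
  moreover obtain q :: nat where "1 / (b - a) < real q"
    using reals_Archimedean2 by blast
  then have gap: "real q * b - real q * a > 1"
    using ab by (simp add: field_simps)
  define p where "p = nat \<lfloor>real q * b\<rfloor>"
  have "real p \<le> real q * b" "real q * b - 1 < real p"
    using ab by (simp_all add: p_def)
  with gap have "(p, q) \<in> ratio_cut b - ratio_cut a"
    by (simp add: ratio_cut_def)
  ultimately show "ratio_cut a \<subset> ratio_cut b" by blast
qed

text \<open>\<open>\<int>\<^sup>2\<close>, transported to \<^typ>\<open>nat\<close> along the countable encoding, since the theorem asks
  for a group on the naturals.\<close>
definition int_pair_group :: "nat monoid" where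
  "int_pair_group =
     \<lparr>carrier = range (to_nat :: int \<times> int \<Rightarrow> nat),
      mult = (\<lambda>x y. to_nat (from_nat x + from_nat y :: int \<times> int)),
      one = to_nat (0 :: int \<times> int)\<rparr>"

definition slope_key :: "real \<Rightarrow> int \<times> int \<Rightarrow> real"
  where "slope_key a p = of_int (fst p) + of_int (snd p) * a"

text \<open>The tie-break on the second coordinate keeps the order antisymmetric for rational \<open>a\<close>.\<close>
definition slope_le :: "real \<Rightarrow> int \<times> int \<Rightarrow> int \<times> int \<Rightarrow> bool" where
  "slope_le a p q \<longleftrightarrow> slope_key a p < slope_key a q \<or> (slope_key a p = slope_key a q \<and> snd p \<le> snd q)"

definition int_pair_le :: "real \<Rightarrow> nat \<Rightarrow> nat \<Rightarrow> bool"
  where "int_pair_le a x y \<longleftrightarrow> slope_le a (from_nat x) (from_nat y)"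

lemma carrier_int_pair_group: "carrier int_pair_group = range (to_nat :: int \<times> int \<Rightarrow> nat)"
  by (simp add: int_pair_group_def)

lemma int_pair_group_mult: "to_nat p \<otimes>\<^bsub>int_pair_group\<^esub> to_nat q = to_nat (p + q :: int \<times> int)"
  by (simp add: int_pair_group_def)

lemma int_pair_group_one: "\<one>\<^bsub>int_pair_group\<^esub> = to_nat (0 :: int \<times> int)"
  by (simp add: int_pair_group_def)

lemma group_int_pair_group: "group int_pair_group"
proof (rule groupI)
  fix x assume "x \<in> carrier int_pair_group"
  then obtain p :: "int \<times> int" where "x = to_nat p"
    by (auto simp: carrier_int_pair_group)
  then show "\<exists>y\<in>carrier int_pair_group. y \<otimes>\<^bsub>int_pair_group\<^esub> x = \<one>\<^bsub>int_pair_group\<^esub>"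
    by (intro bexI[of _ "to_nat (- p)"])
       (simp_all add: carrier_int_pair_group int_pair_group_mult int_pair_group_one)
qed (auto simp: carrier_int_pair_group int_pair_group_mult int_pair_group_one add.assoc)

lemma int_pair_group_pow:
  "to_nat p [^]\<^bsub>int_pair_group\<^esub> n = to_nat (int n * fst p, int n * snd p)"
  by (induction n) (simp_all add: int_pair_group_one int_pair_group_mult algebra_simps prod_eq_iff)

lemma slope_key_add: "slope_key a (p + q) = slope_key a p + slope_key a q"
  by (simp add: slope_key_def algebra_simps)

lemma totally_ordered_int_pair_group: "totally_ordered_group int_pair_group (int_pair_le a)"
proof -
  have refl: "slope_le a p p" for p
    by (simp add: slope_le_def)
  have antisym: "slope_le a p q \<Longrightarrow> slope_le a q p \<Longrightarrow> p = q" for p q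
    by (cases p; cases q) (auto simp: slope_le_def slope_key_def)
  have trans: "slope_le a p q \<Longrightarrow> slope_le a q r \<Longrightarrow> slope_le a p r" for p q r
    by (auto simp: slope_le_def)
  have total: "slope_le a p q \<or> slope_le a q p" for p q
    by (auto simp: slope_le_def)
  have mono: "slope_le a p q \<Longrightarrow> slope_le a (r + p) (r + q) \<and> slope_le a (p + r) (q + r)" for p q r
    by (auto simp: slope_le_def slope_key_add)
  show ?thesis
    unfolding totally_ordered_group_def carrier_int_pair_group
    using group_int_pair_group refl antisym trans total mono
    by (auto simp: int_pair_le_def int_pair_group_mult)
qed

lemma power_cut_of_embedding:
  assumes H: "totally_ordered_group H leH"
    and f: "order_embedding int_pair_group (int_pair_le a) H leH f"
  shows "power_cut H leH (f (to_nat (1 :: int, 0 :: int))) (f (to_nat (0 :: int, 1 :: int))) = ratio_cut a"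
proof -
  have hom: "f \<in> hom int_pair_group H" and "group H"
    using f H unfolding order_embedding_def totally_ordered_group_def by blast+
  have f_pow: "f (to_nat e) [^]\<^bsub>H\<^esub> n = f (to_nat (int n * fst e, int n * snd e))"
    for e :: "int \<times> int" and n :: nat
    using hom_nat_pow[OF hom _ group_int_pair_group \<open>group H\<close>, of "to_nat e" n]
    by (simp add: carrier_int_pair_group int_pair_group_pow)
  have "leH (f (to_nat (int p, 0 :: int))) (f (to_nat (0 :: int, int q))) \<longleftrightarrow> real p \<le> real q * a"
    for p q :: nat
    using order_embedding_reflects_le[OF totally_ordered_int_pair_group H f]
    by (auto simp: carrier_int_pair_group int_pair_le_def slope_le_def slope_key_def)
  then show ?thesis
    by (auto simp: power_cut_def ratio_cut_def f_pow)
qed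

lemma countable_embeddable_slopes:
  assumes H: "totally_ordered_group H leH" and "countable (carrier H)"
  shows "countable {a. 0 \<le> a \<and> (\<exists>f. order_embedding int_pair_group (int_pair_le a) H leH f)}"
    (is "countable ?S")
proof -
  have "ratio_cut ` ?S \<subseteq> (\<lambda>(u, v). power_cut H leH u v) ` (carrier H \<times> carrier H)"
  proof
    fix c assume "c \<in> ratio_cut ` ?S"
    then obtain a f where c: "c = ratio_cut a" and f: "order_embedding int_pair_group (int_pair_le a) H leH f"
      by blast
    have "f \<in> carrier int_pair_group \<rightarrow> carrier H"
      using f by (simp add: order_embedding_def hom_def)
    then have "f (to_nat e) \<in> carrier H" for e :: "int \<times> int"
      by (auto simp: carrier_int_pair_group)
    then show "c \<in> (\<lambda>(u, v). power_cut H leH u v) ` (carrier H \<times> carrier H)"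
      unfolding c power_cut_of_embedding[OF H f, symmetric]
      by (intro rev_image_eqI[of "(f (to_nat (1 :: int, 0 :: int)), f (to_nat (0 :: int, 1 :: int)))"]) simp_all
  qed
  moreover have "countable ((\<lambda>(u, v). power_cut H leH u v) ` (carrier H \<times> carrier H))"
    using assms(2) by simp
  ultimately have "countable (ratio_cut ` ?S)"
    by (rule countable_subset)
  moreover have "inj_on ratio_cut ?S"
    by (rule inj_on_subset[OF strict_mono_on_imp_inj_on[OF strict_mono_on_ratio_cut]]) auto
  ultimately show ?thesis
    using countable_image_inj_on by blast
qed

theorem mainTheorem3:
  fixes U :: "'a monoid" and leU :: "'a \<Rightarrow> 'a \<Rightarrow> bool"
  assumes "totally_ordered_group U leU" and "countable (carrier U)"
  shows "\<exists>(G :: nat monoid) leG. totally_ordered_group G leG \<and> countable (carrier G)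
           \<and> \<not> (\<exists>f. order_embedding G leG U leU f)"
proof -
  let ?S = "{a. 0 \<le> a \<and> (\<exists>f. order_embedding int_pair_group (int_pair_le a) U leU f)}"
  have "countable ?S"
    using countable_embeddable_slopes[OF assms] .
  moreover have "uncountable {0<..<1 :: real}"
    by (simp add: uncountable_open_interval)
  ultimately obtain a where "a \<in> {0<..<1 :: real}" "a \<notin> ?S"
    by (meson countable_subset subsetI)
  then have "\<not> (\<exists>f. order_embedding int_pair_group (int_pair_le a) U leU f)"
    by simp
  then show ?thesis
    by (intro exI[of _ int_pair_group] exI[of _ "int_pair_le a"])
       (simp add: totally_ordered_int_pair_group carrier_int_pair_group)
qed

end
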